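(* Let $K\in\{\mathbb R,\mathbb C,\mathbb H\}$ and let $(E,d)$ be a metric vector space over $K$ such that $d$ is asymptotically multiplicative, unbounded on every non-trivial linear subspace, and such that for every $C_1>1$ there exists $C_0\ge0$ with $d\big(\sum_{i=1}^n x_i,\sum_{i=1}^n y_i\big)\le C_1\sum_{i=1}^n d(x_i,y_i)+nC_0$ for all $n\ge2$ and $x_1,\dots,x_n,y_1,\dots,y_n\in E$. Let $d_0(x,y)=\int_{\mathbb U}d(ux,uy)\,d\mu(u)$. Then for all $x,y\in E$ the limit $\lim_{n\to+\infty}\frac1n d_0(nx,ny)$ exists.
   Context: A metric vector space is a topological vector space over $K$ whose topology is generated by the metric $d$. $\mathbb U=\{u\in K:|u|=1\}$, $\mu$ the right-invariant Haar probability measure on $\mathbb U$. $d$ is asymptotically multiplicative if for every $C_1>1$ there exist $C_2,C_3\ge0$ with $C_1^{-1}|\lambda|d(x,y)-C_2|\lambda|-C_3\le d(\lambda x,\lambda y)\le C_1|\lambda|d(x,y)+C_2|\lambda|+C_3$ for all $\lambda\in K$, $x,y\in E$. *)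

theory Defs
  imports "HOL-Probability.Probability"
begin

text \<open>The scalar field K is modelled by a type of class real_normed_div_algebra
  (an associative real division algebra with multiplicative norm); up to isomorphism
  these are exactly R, C and H.\<close>

definition left_vector_space :: "('k::real_normed_div_algebra \<Rightarrow> 'e::ab_group_add \<Rightarrow> 'e) \<Rightarrow> bool" where
  "left_vector_space sc \<longleftrightarrow>
     (\<forall>a x y. sc a (x + y) = sc a x + sc a y) \<and>
     (\<forall>a b x. sc (a + b) x = sc a x + sc b x) \<and>
     (\<forall>a b x. sc (a * b) x = sc a (sc b x)) \<and>
     (\<forall>x. sc 1 x = x)"

definition is_metric :: "('e \<Rightarrow> 'e \<Rightarrow> real) \<Rightarrow> bool" where
  "is_metric d \<longleftrightarrow>
     (\<forall>x y. d x y = 0 \<longleftrightarrow> x = y) \<and>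
     (\<forall>x y. d x y = d y x) \<and>
     (\<forall>x y z. d x z \<le> d x y + d y z)"

definition metric_vector_space ::
  "('k::real_normed_div_algebra \<Rightarrow> 'e::ab_group_add \<Rightarrow> 'e) \<Rightarrow> ('e \<Rightarrow> 'e \<Rightarrow> real) \<Rightarrow> bool" where
  "metric_vector_space sc d \<longleftrightarrow>
     left_vector_space sc \<and> is_metric d \<and>
     (\<forall>x y. \<forall>\<epsilon>>0. \<exists>\<delta>>0. \<forall>x' y'. d x x' < \<delta> \<and> d y y' < \<delta> \<longrightarrow> d (x + y) (x' + y') < \<epsilon>) \<and>
     (\<forall>a x. \<forall>\<epsilon>>0. \<exists>\<delta>>0. \<forall>a' x'. norm (a - a') < \<delta> \<and> d x x' < \<delta> \<longrightarrow> d (sc a x) (sc a' x') < \<epsilon>)"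

definition asymptotically_multiplicative ::
  "('k::real_normed_div_algebra \<Rightarrow> 'e \<Rightarrow> 'e) \<Rightarrow> ('e \<Rightarrow> 'e \<Rightarrow> real) \<Rightarrow> bool" where
  "asymptotically_multiplicative sc d \<longleftrightarrow>
     (\<forall>C1>1. \<exists>C2\<ge>0. \<exists>C3\<ge>0. \<forall>c x y.
        inverse C1 * norm c * d x y - C2 * norm c - C3 \<le> d (sc c x) (sc c y) \<and>
        d (sc c x) (sc c y) \<le> C1 * norm c * d x y + C2 * norm c + C3)"

definition linear_subspace ::
  "('k::real_normed_div_algebra \<Rightarrow> 'e::ab_group_add \<Rightarrow> 'e) \<Rightarrow> 'e set \<Rightarrow> bool" where
  "linear_subspace sc V \<longleftrightarrow>
     0 \<in> V \<and> (\<forall>x\<in>V. \<forall>y\<in>V. x + y \<in> V) \<and> (\<forall>a. \<forall>x\<in>V. sc a x \<in> V)"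

definition unbounded_on_subspaces ::
  "('k::real_normed_div_algebra \<Rightarrow> 'e::ab_group_add \<Rightarrow> 'e) \<Rightarrow> ('e \<Rightarrow> 'e \<Rightarrow> real) \<Rightarrow> bool" where
  "unbounded_on_subspaces sc d \<longleftrightarrow>
     (\<forall>V. linear_subspace sc V \<and> V \<noteq> {0} \<longrightarrow> \<not> (\<exists>M. \<forall>x\<in>V. \<forall>y\<in>V. d x y \<le> M))"

definition unit_sphere :: "'k::real_normed_div_algebra set" where
  "unit_sphere = {u. norm u = 1}"

definition right_haar_prob :: "'k::real_normed_div_algebra measure \<Rightarrow> bool" where
  "right_haar_prob \<mu> \<longleftrightarrow>
     prob_space \<mu> \<and> space \<mu> = unit_sphere \<and>
     sets \<mu> = sets (restrict_space borel unit_sphere) \<and>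
     (\<forall>u\<in>unit_sphere. distr \<mu> \<mu> (\<lambda>v. v * u) = \<mu>)"

definition d0 ::
  "('k::real_normed_div_algebra \<Rightarrow> 'e \<Rightarrow> 'e) \<Rightarrow> ('e \<Rightarrow> 'e \<Rightarrow> real) \<Rightarrow> 'k measure \<Rightarrow> 'e \<Rightarrow> 'e \<Rightarrow> real" where
  "d0 sc d \<mu> x y = (\<integral>u. d (sc u x) (sc u y) \<partial>\<mu>)"

end

(* Put a n = d0 (n x) (n y). Asymptotic multiplicativity bounds a n by A n + B. Writing
   n = k m + r, the vectors u (n x) split as k copies of u (m x) plus u (r x), so the
   hypothesis on sums, applied pointwise and integrated over the unit sphere, gives
   a (k m + r) <= C1 (k a m + a r) + (k + 1) C0 for every C1 > 1. As in Fekete's lemma this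
   yields limsup a n / n <= a m / m + eta for all large m, hence limsup = liminf. *)
theory Submission
  imports Defs
begin

section \<open>Almost subadditive sequences\<close>

definition almost_subadditive_seq :: "(nat \<Rightarrow> real) \<Rightarrow> bool" where
  "almost_subadditive_seq a \<longleftrightarrow>
     (\<forall>C1>1. \<exists>C0\<ge>0. \<forall>k m r. k \<ge> 1 \<longrightarrow>
        a (k * m + r) \<le> C1 * (real k * a m + a r) + real (k + 1) * C0)"

lemma div_le_of_le_linear:
  fixes a :: real
  assumes "a \<le> A * real n + B" and "0 \<le> A" and "0 \<le> B"
  shows "a / real n \<le> A + B"
proof (cases "n = 0")
  case False
  then have "a / real n \<le> A + B / real n"
    using assms(1) by (simp add: divide_le_eq algebra_simps)
  also have "\<dots> \<le> A + B"
    using False assms(3) mult_left_mono[of 1 "real n" B] by (simp add: divide_le_eq)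
  finally show ?thesis .
qed (use assms in simp)

lemma convergent_if_eventually_le_add:
  fixes b :: "nat \<Rightarrow> real"
  assumes bounded: "\<And>n. \<bar>b n\<bar> \<le> M"
    and le: "\<And>\<eta>. \<eta> > 0 \<Longrightarrow> \<exists>m0. \<forall>m\<ge>m0. \<forall>\<^sub>F n in sequentially. b n \<le> b m + \<eta>"
  shows "convergent b"
proof -
  have "- M \<le> b n" "b n \<le> M" for n
    using bounded[of n] by linarith+
  then have "limsup b \<le> ereal M" and "ereal (- M) \<le> liminf b"
    by (auto intro: Limsup_bounded Liminf_bounded)
  moreover have "liminf b \<le> limsup b"
    by (rule Liminf_le_Limsup) simp
  ultimately obtain s i where s: "limsup b = ereal s" and i: "liminf b = ereal i"
    by (cases "limsup b"; cases "liminf b") auto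
  have "s \<le> i + \<eta>" if \<eta>: "\<eta> > 0" for \<eta>
  proof -
    obtain m0 where m0: "\<And>m. m \<ge> m0 \<Longrightarrow> \<forall>\<^sub>F n in sequentially. b n \<le> b m + \<eta>"
      using le[OF \<eta>] by blast
    have "ereal (s - \<eta>) \<le> b m" if "m \<ge> m0" for m
    proof -
      have "limsup b \<le> ereal (b m + \<eta>)"
        using m0[OF that] by (intro Limsup_bounded) (auto elim: eventually_mono)
      then show ?thesis using s by simp
    qed
    then have "ereal (s - \<eta>) \<le> liminf b"
      by (intro Liminf_bounded eventually_sequentiallyI)
    then show ?thesis using i by simp
  qed
  then have "limsup b \<le> ereal i"
    using s by (simp add: field_le_epsilon)
  then have "b \<longlonglongrightarrow> i"
    using i by (intro limsup_le_liminf_real) simp_all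
  then show ?thesis
    by (auto simp: convergent_def)
qed

lemma almost_subadditive_div_le:
  fixes a :: "nat \<Rightarrow> real"
  assumes nonneg: "\<And>n. 0 \<le> a n"
    and linear: "\<And>n. a n \<le> A * real n + B" and "0 \<le> A" and "0 \<le> B"
    and "0 \<le> \<delta>" and "0 \<le> C0"
    and sub: "\<And>k m r. k \<ge> 1 \<Longrightarrow> a (k * m + r) \<le> (1 + \<delta>) * (real k * a m + a r) + real (k + 1) * C0"
    and "1 \<le> m" and "m \<le> n"
  shows "a n / real n \<le> a m / real m + \<delta> * (A + B) + C0 / real m
                           + ((1 + \<delta>) * (A * real m + B) + C0) / real n"
proof -
  define k where "k = n div m"
  define r where "r = n mod m"
  have n: "n = k * m + r" and "k \<ge> 1" and "r < m"
    using assms(8,9) by (auto simp: k_def r_def div_greater_zero_iff Suc_le_eq)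
  have m: "real m > 0" and kmn: "real k * real m \<le> real n"
    using assms(8) by (auto simp: n)
  have k_div: "real k * c / real n \<le> c / real m" if "0 \<le> c" for c
    using mult_left_mono[OF kmn that] m assms(9) by (simp add: field_simps)
  have "(1 + \<delta>) * (real k * a m / real n) \<le> (1 + \<delta>) * (a m / real m)"
    using k_div[OF nonneg[of m]] assms(5) by (intro mult_left_mono) simp_all
  also have "\<dots> = a m / real m + \<delta> * (a m / real m)"
    by (simp add: distrib_right add_divide_distrib)
  also have "\<dots> \<le> a m / real m + \<delta> * (A + B)"
    using mult_left_mono[OF div_le_of_le_linear[OF linear assms(3,4)] assms(5), of m] by simp
  finally have first: "(1 + \<delta>) * (real k * a m / real n) \<le> a m / real m + \<delta> * (A + B)" .
  have "a r \<le> A * real m + B"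
    using linear[of r] \<open>r < m\<close> mult_left_mono[of "real r" "real m" A] assms(3) by simp
  then have third: "(1 + \<delta>) * a r + C0 \<le> (1 + \<delta>) * (A * real m + B) + C0"
    using assms(5) by (simp add: mult_left_mono)
  have "a n \<le> (1 + \<delta>) * (real k * a m) + real k * C0 + ((1 + \<delta>) * a r + C0)"
    using sub[OF \<open>k \<ge> 1\<close>, of m r] by (simp add: n algebra_simps)
  then have "a n / real n \<le> ((1 + \<delta>) * (real k * a m) + real k * C0 + ((1 + \<delta>) * a r + C0)) / real n"
    by (rule divide_right_mono) simp
  also have "\<dots> = (1 + \<delta>) * (real k * a m / real n) + real k * C0 / real n
                    + ((1 + \<delta>) * a r + C0) / real n"
    by (simp add: add_divide_distrib)
  also have "\<dots> \<le> a m / real m + \<delta> * (A + B) + C0 / real m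
                    + ((1 + \<delta>) * (A * real m + B) + C0) / real n"
    using first k_div[OF assms(6)] third by (intro add_mono divide_right_mono) simp_all
  finally show ?thesis .
qed

lemma almost_subadditive_seq_eventually_div_le:
  fixes a :: "nat \<Rightarrow> real"
  assumes "almost_subadditive_seq a" and nonneg: "\<And>n. 0 \<le> a n"
    and linear: "\<And>n. a n \<le> A * real n + B" and "0 \<le> A" and "0 \<le> B"
    and "\<eta> > 0"
  shows "\<exists>m0. \<forall>m\<ge>m0. \<forall>\<^sub>F n in sequentially. a n / real n \<le> a m / real m + \<eta>"
proof -
  define \<delta> where "\<delta> = \<eta> / (3 * (A + B + 1))"
  have "\<delta> > 0"
    using assms(4-6) by (simp add: \<delta>_def)
  have "\<delta> * (A + B) \<le> \<delta> * (A + B + 1)"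
    using \<open>\<delta> > 0\<close> by simp
  also have "\<dots> = \<eta> / 3"
    using assms(4,5) by (simp add: \<delta>_def field_simps)
  finally have \<delta>_small: "\<delta> * (A + B) \<le> \<eta> / 3" .
  obtain C0 where "C0 \<ge> 0" and sub: "\<And>k m r. k \<ge> 1 \<Longrightarrow>
      a (k * m + r) \<le> (1 + \<delta>) * (real k * a m + a r) + real (k + 1) * C0"
    using assms(1) \<open>\<delta> > 0\<close> unfolding almost_subadditive_seq_def by (meson less_add_same_cancel1)
  have "\<forall>\<^sub>F m in sequentially. C0 / real m < \<eta> / 3"
    using assms(6) by (intro order_tendstoD(2)[OF lim_const_over_n]) simp
  then obtain m0 where m0: "\<And>m. m \<ge> m0 \<Longrightarrow> C0 / real m < \<eta> / 3"
    by (auto simp: eventually_sequentially)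
  show ?thesis
  proof (intro exI[of _ "max m0 1"] allI impI)
    fix m assume m: "max m0 1 \<le> m"
    have "\<forall>\<^sub>F n in sequentially. ((1 + \<delta>) * (A * real m + B) + C0) / real n < \<eta> / 3"
      using assms(6) by (intro order_tendstoD(2)[OF lim_const_over_n]) simp
    moreover have "\<forall>\<^sub>F n in sequentially. m \<le> n"
      by (rule eventually_ge_at_top)
    ultimately show "\<forall>\<^sub>F n in sequentially. a n / real n \<le> a m / real m + \<eta>"
    proof eventually_elim
      case (elim n)
      have "m \<ge> 1" and "m \<ge> m0"
        using m by simp_all
      then show ?case
        using almost_subadditive_div_le[OF nonneg linear assms(4,5) less_imp_le[OF \<open>\<delta> > 0\<close>] \<open>C0 \<ge> 0\<close> sub, of m n]
          elim \<open>\<delta> > 0\<close> \<delta>_small m0[of m] by linarith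
    qed
  qed
qed

lemma convergent_div_if_almost_subadditive_seq:
  fixes a :: "nat \<Rightarrow> real"
  assumes "almost_subadditive_seq a" and "\<And>n. 0 \<le> a n"
    and "\<And>n. a n \<le> A * real n + B" and "0 \<le> A" and "0 \<le> B"
  shows "convergent (\<lambda>n. a n / real n)"
proof (rule convergent_if_eventually_le_add)
  show "\<bar>a n / real n\<bar> \<le> A + B" for n
    using div_le_of_le_linear[OF assms(3-5)] assms(2) by simp
qed (use almost_subadditive_seq_eventually_div_le[OF assms] in blast)

section \<open>Splitting multiples of a vector\<close>

lemma left_vector_space_zero_scale:
  assumes "left_vector_space sc"
  shows "sc 0 z = 0"
proof -
  have "sc (0 + 0) z = sc 0 z + sc 0 z"
    using assms unfolding left_vector_space_def by blast
  then show ?thesis by simp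
qed

lemma left_vector_space_sum_scale:
  assumes "left_vector_space sc"
  shows "sc (sum f S) z = (\<Sum>i\<in>S. sc (f i) z)"
proof (cases "finite S")
  case True
  then show ?thesis
    using assms by (induction S rule: finite_induct)
      (auto simp: left_vector_space_zero_scale left_vector_space_def)
qed (simp add: left_vector_space_zero_scale[OF assms])

lemma left_vector_space_scale_nat_mult_add:
  assumes "left_vector_space sc"
  shows "sc u (sc (of_nat (k * m + r)) z)
           = (\<Sum>i=1..k. sc u (sc (of_nat m) z)) + sc u (sc (of_nat r) z)"
proof -
  have scale_mult: "sc (a * b) z = sc a (sc b z)" and scale_add: "sc (a + b) z = sc a z + sc b z" for a b
    using assms unfolding left_vector_space_def by blast+
  have "u * of_nat (k * m + r) = (\<Sum>i=1..k. u * of_nat m) + u * of_nat r"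
    by (simp add: distrib_left) (metis mult.assoc mult_of_nat_commute)
  then have "sc u (sc (of_nat (k * m + r)) z) = sc ((\<Sum>i=1..k. u * of_nat m) + u * of_nat r) z"
    by (simp flip: scale_mult)
  also have "\<dots> = (\<Sum>i=1..k. sc u (sc (of_nat m) z)) + sc u (sc (of_nat r) z)"
    by (simp only: scale_add scale_mult left_vector_space_sum_scale[OF assms])
  finally show ?thesis .
qed

definition almost_subadditive_on_sums :: "('e::ab_group_add \<Rightarrow> 'e \<Rightarrow> real) \<Rightarrow> bool" where
  "almost_subadditive_on_sums d \<longleftrightarrow>
     (\<forall>C1>1. \<exists>C0\<ge>0. \<forall>n\<ge>2. \<forall>x y :: nat \<Rightarrow> 'e.
        d (\<Sum>i=1..n. x i) (\<Sum>i=1..n. y i) \<le> C1 * (\<Sum>i=1..n. d (x i) (y i)) + real n * C0)"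

lemma replicate_sum_add_le:
  fixes d :: "'e::ab_group_add \<Rightarrow> 'e \<Rightarrow> real"
  assumes sums: "\<forall>n\<ge>2. \<forall>x y :: nat \<Rightarrow> 'e.
        d (\<Sum>i=1..n. x i) (\<Sum>i=1..n. y i) \<le> C1 * (\<Sum>i=1..n. d (x i) (y i)) + real n * C0"
    and "k \<ge> 1"
  shows "d ((\<Sum>i=1..k. p) + r) ((\<Sum>i=1..k. q) + s) \<le> C1 * (real k * d p q + d r s) + real (k + 1) * C0"
proof -
  define x where "x i = (if i \<le> k then p else r)" for i
  define y where "y i = (if i \<le> k then q else s)" for i
  have "(\<Sum>i=1..k. x i) = (\<Sum>i=1..k. p)" "(\<Sum>i=1..k. y i) = (\<Sum>i=1..k. q)"
    "(\<Sum>i=1..k. d (x i) (y i)) = (\<Sum>i=1..k. d p q)"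
    by (auto intro!: sum.cong simp: x_def y_def)
  then have "(\<Sum>i=1..Suc k. x i) = (\<Sum>i=1..k. p) + r" "(\<Sum>i=1..Suc k. y i) = (\<Sum>i=1..k. q) + s"
    "(\<Sum>i=1..Suc k. d (x i) (y i)) = real k * d p q + d r s"
    by (simp_all add: x_def y_def)
  moreover have "Suc k \<ge> 2"
    using assms(2) by simp
  ultimately show ?thesis
    using sums by (metis Suc_eq_plus1)
qed

section \<open>The averaged distance\<close>

lemma is_metric_nonneg:
  assumes "is_metric d"
  shows "0 \<le> d x y"
proof -
  have "d x x \<le> d x y + d y x" "d x x = 0" "d x y = d y x"
    using assms unfolding is_metric_def by blast+
  then show ?thesis by linarith
qed

lemma is_metric_diff_le:
  assumes "is_metric d"
  shows "\<bar>d a b - d a' b'\<bar> \<le> d a a' + d b b'"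
proof -
  have "d a b \<le> d a a' + d a' b" "d a' b \<le> d a' b' + d b' b"
    "d a' b' \<le> d a' a + d a b'" "d a b' \<le> d a b + d b b'"
    "d a' a = d a a'" "d b' b = d b b'"
    using assms unfolding is_metric_def by blast+
  then show ?thesis by linarith
qed

lemma metric_vector_space_scale_continuous:
  assumes "metric_vector_space sc d" and "\<epsilon> > 0"
  shows "\<exists>\<delta>>0. \<forall>a'. norm (a - a') < \<delta> \<longrightarrow> d (sc a z) (sc a' z) < \<epsilon>"
proof -
  have "d z z = 0"
    using assms(1) unfolding metric_vector_space_def is_metric_def by blast
  then show ?thesis
    using assms unfolding metric_vector_space_def by (metis order_less_le)
qed

lemma continuous_on_d_scale:
  assumes "metric_vector_space sc d"
  shows "continuous_on UNIV (\<lambda>u. d (sc u p) (sc u q))"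
  unfolding continuous_on_iff
proof (intro ballI allI impI)
  fix u :: 'a and e :: real
  assume "e > 0"
  obtain \<delta>p \<delta>q where "\<delta>p > 0" "\<delta>q > 0"
    and p: "\<And>v. norm (u - v) < \<delta>p \<Longrightarrow> d (sc u p) (sc v p) < e / 2"
    and q: "\<And>v. norm (u - v) < \<delta>q \<Longrightarrow> d (sc u q) (sc v q) < e / 2"
    using metric_vector_space_scale_continuous[OF assms, of "e / 2"] \<open>e > 0\<close> by (meson half_gt_zero)
  have "dist (d (sc v p) (sc v q)) (d (sc u p) (sc u q)) < e" if "dist v u < min \<delta>p \<delta>q" for v
  proof -
    have "norm (u - v) < \<delta>p" "norm (u - v) < \<delta>q"
      using that by (simp_all add: dist_norm norm_minus_commute)
    moreover have "is_metric d"
      using assms unfolding metric_vector_space_def by blast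
    ultimately show ?thesis
      using p[of v] q[of v] is_metric_diff_le[of d "sc u p" "sc u q" "sc v p" "sc v q"]
      unfolding dist_real_def by (simp add: abs_minus_commute)
  qed
  then show "\<exists>\<delta>>0. \<forall>v\<in>UNIV. dist v u < \<delta> \<longrightarrow> dist (d (sc v p) (sc v q)) (d (sc u p) (sc u q)) < e"
    using \<open>\<delta>p > 0\<close> \<open>\<delta>q > 0\<close> by (metis UNIV_I min_less_iff_conj)
qed

lemma asymptotically_multiplicative_upper_bound:
  assumes "asymptotically_multiplicative sc d"
  shows "\<exists>C2\<ge>0. \<exists>C3\<ge>0. \<forall>c x y. d (sc c x) (sc c y) \<le> 2 * norm c * d x y + C2 * norm c + C3"
  using assms[unfolded asymptotically_multiplicative_def, rule_format, of 2] by fastforce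

lemma integrable_d_scale:
  assumes mvs: "metric_vector_space sc d" and "asymptotically_multiplicative sc d"
    and "right_haar_prob \<mu>"
  shows "integrable \<mu> (\<lambda>u. d (sc u p) (sc u q))"
proof -
  have "prob_space \<mu>" and space: "space \<mu> = unit_sphere"
    and sets: "sets \<mu> = sets (restrict_space borel unit_sphere)"
    using assms(3) unfolding right_haar_prob_def by blast+
  interpret prob_space \<mu> by fact
  obtain C2 C3 where bound: "\<And>c x y. d (sc c x) (sc c y) \<le> 2 * norm c * d x y + C2 * norm c + C3"
    using asymptotically_multiplicative_upper_bound[OF assms(2)] by blast
  have "(\<lambda>u. d (sc u p) (sc u q)) \<in> borel_measurable (restrict_space borel unit_sphere)"
    by (intro measurable_restrict_space1 borel_measurable_continuous_onI continuous_on_d_scale mvs)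
  then have "(\<lambda>u. d (sc u p) (sc u q)) \<in> borel_measurable \<mu>"
    using measurable_cong_sets[OF sets refl] by blast
  moreover have "norm (d (sc u p) (sc u q)) \<le> 2 * d p q + C2 + C3" if "u \<in> space \<mu>" for u
  proof -
    have "norm u = 1"
      using that by (simp add: space unit_sphere_def)
    moreover have "is_metric d"
      using mvs unfolding metric_vector_space_def by blast
    ultimately show ?thesis
      using bound[of u p q] is_metric_nonneg[of d] by simp
  qed
  ultimately show ?thesis
    by (intro integrable_const_bound[where B = "2 * d p q + C2 + C3"] AE_I2) auto
qed

lemma d0_nonneg:
  assumes "is_metric d"
  shows "0 \<le> d0 sc d \<mu> x y"
  unfolding d0_def by (intro Bochner_Integration.integral_nonneg is_metric_nonneg[OF assms])

lemma d0_scale_nat_le_linear: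
  assumes mvs: "metric_vector_space sc d" and am: "asymptotically_multiplicative sc d"
    and haar: "right_haar_prob \<mu>"
  obtains A B where "A \<ge> 0" and "B \<ge> 0"
    and "\<And>n. d0 sc d \<mu> (sc (of_nat n) x) (sc (of_nat n) y) \<le> A * real n + B"
proof -
  have "left_vector_space sc" and "is_metric d"
    using mvs unfolding metric_vector_space_def by blast+
  have "prob_space \<mu>" and space: "space \<mu> = unit_sphere"
    using haar unfolding right_haar_prob_def by blast+
  interpret prob_space \<mu> by fact
  obtain C2 C3 where "C2 \<ge> 0" "C3 \<ge> 0"
    and bound: "\<And>c x y. d (sc c x) (sc c y) \<le> 2 * norm c * d x y + C2 * norm c + C3"
    using asymptotically_multiplicative_upper_bound[OF am] by blast
  define A where "A = 2 * d x y + C2"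
  have pointwise: "d (sc u (sc (of_nat n) x)) (sc u (sc (of_nat n) y)) \<le> A * real n + C3"
    if "u \<in> space \<mu>" for u n
  proof -
    have "norm (u * of_nat n) = real n"
      using that by (simp add: space unit_sphere_def norm_mult)
    moreover have "sc u (sc (of_nat n) z) = sc (u * of_nat n) z" for z
      using \<open>left_vector_space sc\<close> unfolding left_vector_space_def by simp
    ultimately show ?thesis
      using bound[of "u * of_nat n" x y] by (simp add: A_def algebra_simps)
  qed
  have "d0 sc d \<mu> (sc (of_nat n) x) (sc (of_nat n) y) \<le> A * real n + C3" for n
  proof -
    have "d0 sc d \<mu> (sc (of_nat n) x) (sc (of_nat n) y) \<le> (\<integral>u. A * real n + C3 \<partial>\<mu>)"
      unfolding d0_def using pointwise integrable_d_scale[OF mvs am haar]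
      by (intro integral_mono) auto
    then show ?thesis by (simp add: prob_space)
  qed
  moreover have "A \<ge> 0"
    using \<open>C2 \<ge> 0\<close> is_metric_nonneg[OF \<open>is_metric d\<close>] by (simp add: A_def)
  ultimately show ?thesis
    using that \<open>C3 \<ge> 0\<close> by blast
qed

lemma d0_scale_nat_mult_add_le:
  fixes sc :: "'k::real_normed_div_algebra \<Rightarrow> 'e::ab_group_add \<Rightarrow> 'e"
  assumes mvs: "metric_vector_space sc d" and am: "asymptotically_multiplicative sc d"
    and haar: "right_haar_prob \<mu>"
    and sums: "\<forall>n\<ge>2. \<forall>x y :: nat \<Rightarrow> 'e.
        d (\<Sum>i=1..n. x i) (\<Sum>i=1..n. y i) \<le> C1 * (\<Sum>i=1..n. d (x i) (y i)) + real n * C0"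
    and "k \<ge> 1"
  shows "d0 sc d \<mu> (sc (of_nat (k * m + r)) x) (sc (of_nat (k * m + r)) y)
           \<le> C1 * (real k * d0 sc d \<mu> (sc (of_nat m) x) (sc (of_nat m) y)
                    + d0 sc d \<mu> (sc (of_nat r) x) (sc (of_nat r) y)) + real (k + 1) * C0"
proof -
  have "prob_space \<mu>"
    using haar unfolding right_haar_prob_def by blast
  interpret prob_space \<mu> by fact
  have lvs: "left_vector_space sc"
    using mvs unfolding metric_vector_space_def by blast
  define D where "D n u = d (sc u (sc (of_nat n) x)) (sc u (sc (of_nat n) y))" for n u
  have D_int: "integrable \<mu> (D n)" for n
    unfolding D_def by (rule integrable_d_scale[OF mvs am haar])
  have "D (k * m + r) u \<le> C1 * (real k * D m u + D r u) + real (k + 1) * C0" for u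
    unfolding D_def left_vector_space_scale_nat_mult_add[OF lvs]
    by (rule replicate_sum_add_le[OF sums \<open>k \<ge> 1\<close>])
  then have "integral\<^sup>L \<mu> (D (k * m + r)) \<le> (\<integral>u. C1 * (real k * D m u + D r u) + real (k + 1) * C0 \<partial>\<mu>)"
    using D_int by (intro integral_mono) auto
  also have "\<dots> = C1 * (real k * integral\<^sup>L \<mu> (D m) + integral\<^sup>L \<mu> (D r)) + real (k + 1) * C0"
    using D_int by (simp add: prob_space)
  finally show ?thesis
    unfolding d0_def D_def .
qed

lemma d0_scale_nat_almost_subadditive:
  assumes "metric_vector_space sc d" and "asymptotically_multiplicative sc d"
    and "right_haar_prob \<mu>" and "almost_subadditive_on_sums d"
  shows "almost_subadditive_seq (\<lambda>n. d0 sc d \<mu> (sc (of_nat n) x) (sc (of_nat n) y))"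
  using assms(4) d0_scale_nat_mult_add_le[OF assms(1-3)]
  unfolding almost_subadditive_on_sums_def almost_subadditive_seq_def by meson

theorem proposition8:
  fixes sc :: "'k::real_normed_div_algebra \<Rightarrow> 'e::ab_group_add \<Rightarrow> 'e"
    and d :: "'e \<Rightarrow> 'e \<Rightarrow> real"
    and \<mu> :: "'k measure"
  assumes "metric_vector_space sc d"
    and "asymptotically_multiplicative sc d"
    and "unbounded_on_subspaces sc d"
    and "\<forall>C1>1. \<exists>C0\<ge>0. \<forall>n\<ge>2. \<forall>x y :: nat \<Rightarrow> 'e.
           d (\<Sum>i=1..n. x i) (\<Sum>i=1..n. y i) \<le> C1 * (\<Sum>i=1..n. d (x i) (y i)) + real n * C0"
    and "right_haar_prob \<mu>"
  shows "\<forall>x y. convergent (\<lambda>n::nat. d0 sc d \<mu> (sc (of_nat n) x) (sc (of_nat n) y) / real n)"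
proof (intro allI)
  fix x y
  have "is_metric d"
    using assms(1) unfolding metric_vector_space_def by blast
  obtain A B where "A \<ge> 0" "B \<ge> 0"
    and "\<And>n. d0 sc d \<mu> (sc (of_nat n) x) (sc (of_nat n) y) \<le> A * real n + B"
    using d0_scale_nat_le_linear[OF assms(1,2,5), of x y] by blast
  moreover have "almost_subadditive_seq (\<lambda>n. d0 sc d \<mu> (sc (of_nat n) x) (sc (of_nat n) y))"
    using assms(4)[folded almost_subadditive_on_sums_def]
    by (rule d0_scale_nat_almost_subadditive[OF assms(1,2,5)])
  ultimately show "convergent (\<lambda>n. d0 sc d \<mu> (sc (of_nat n) x) (sc (of_nat n) y) / real n)"
    using d0_nonneg[OF \<open>is_metric d\<close>] by (intro convergent_div_if_almost_subadditive_seq)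
qed

end
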